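(* Let $B_i\colon\mathbb{R}^d\to\mathbb{R}^{d_i}$ ($i=1,\dots,k$) be surjective linear maps and $c_i>0$. Suppose $p\ge1$ and $\theta_1,\dots,\theta_k$ are nonzero real numbers with $\theta_1+\dots+\theta_k=1$ such that $\theta_i>0$ for precisely one index $i$. Define $p_i$ by $c_i\left(1-\frac1p\right)=\theta_i\left(1-\frac1{p_i}\right)$. Then for non-negative measurable $f$ on $\mathbb{R}^d$, $$\|f\|_{L^p(\mathbb{R}^d)}\ge\mathrm{BL}(\mathbf{B},\mathbf{c})^{\frac1p-1}\prod_{i=1}^k\|(B_i)_*f\|_{L^{p_i}(\mathbb{R}^{d_i})}^{\theta_i}.$$
   Context: $\mathrm{BL}(\mathbf{B},\mathbf{c})\in(0,\infty]$ is the best constant such that $\int_{\mathbb{R}^d}\prod_i f_i(B_ix)^{c_i}dx\le\mathrm{BL}(\mathbf{B},\mathbf{c})\prod_i(\int_{\mathbb{R}^{d_i}}f_i)^{c_i}$ for all non-negative integrable $f_i$. For surjective linear $B\colon\mathbb{R}^d\to\mathbb{R}^{d'}$ and $f\ge0$ on $\mathbb{R}^d$, the pushforward $B_*f$ is defined by $\int_{\mathbb{R}^{d'}}B_*f(y)F(y)\,dy=\int_{\mathbb{R}^d}f(x)F(Bx)\,dx$ for all measurable $F\ge0$. *)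

theory Defs
  imports "HOL-Analysis.Analysis" "HOL-Probability.Essential_Supremum"
begin

text \<open>Lebesgue (Borel) measure on R^n, realised as the product measure on
  extensional functions {..<n} -> real.\<close>
definition lebn :: "nat \<Rightarrow> (nat \<Rightarrow> real) measure" where
  "lebn n = PiM {..<n} (\<lambda>_. lborel)"

definition matapp :: "nat \<Rightarrow> nat \<Rightarrow> (nat \<Rightarrow> nat \<Rightarrow> real) \<Rightarrow> (nat \<Rightarrow> real) \<Rightarrow> (nat \<Rightarrow> real)" where
  "matapp n m M x = (\<lambda>r\<in>{..<n}. \<Sum>j<m. M r j * x j)"

definition epow :: "ennreal \<Rightarrow> real \<Rightarrow> ennreal" where
  "epow a r =
     (if a = 0 then (if r > 0 then 0 else if r = 0 then 1 else \<infinity>)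
      else if a = \<infinity> then (if r > 0 then \<infinity> else if r = 0 then 1 else 0)
      else ennreal (enn2real a powr r))"

text \<open>L^p "norm" parametrised by q = 1/p (q = 0 means p = inf):
  (int g^p)^(1/p) for q \<noteq> 0 (including negative p), esssup for q = 0.\<close>
definition Lnorm_inv :: "'a measure \<Rightarrow> real \<Rightarrow> ('a \<Rightarrow> ennreal) \<Rightarrow> ennreal" where
  "Lnorm_inv M q g =
     (if q = 0 then esssup M g else epow (\<integral>\<^sup>+ x. epow (g x) (1 / q) \<partial>M) q)"

definition BL :: "nat \<Rightarrow> nat \<Rightarrow> (nat \<Rightarrow> nat) \<Rightarrow> (nat \<Rightarrow> nat \<Rightarrow> nat \<Rightarrow> real)
                   \<Rightarrow> (nat \<Rightarrow> real) \<Rightarrow> ennreal" where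
  "BL d k dd B c = Inf {C. \<forall>f. (\<forall>i\<in>{1..k}. f i \<in> borel_measurable (lebn (dd i))
                               \<and> (\<integral>\<^sup>+ y. f i y \<partial>lebn (dd i)) < \<infinity>) \<longrightarrow>
        (\<integral>\<^sup>+ x. (\<Prod>i\<in>{1..k}. epow (f i (matapp (dd i) d (B i) x)) (c i)) \<partial>lebn d)
          \<le> C * (\<Prod>i\<in>{1..k}. epow (\<integral>\<^sup>+ y. f i y \<partial>lebn (dd i)) (c i))}"

text \<open>g is (a version of) the pushforward B_* f of f under the map B : R^m -> R^n.\<close>
definition is_pushforward :: "nat \<Rightarrow> nat \<Rightarrow> ((nat \<Rightarrow> real) \<Rightarrow> (nat \<Rightarrow> real))
        \<Rightarrow> ((nat \<Rightarrow> real) \<Rightarrow> ennreal) \<Rightarrow> ((nat \<Rightarrow> real) \<Rightarrow> ennreal) \<Rightarrow> bool" where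
  "is_pushforward m n Bm f g \<longleftrightarrow> g \<in> borel_measurable (lebn n) \<and>
     (\<forall>F \<in> borel_measurable (lebn n).
        (\<integral>\<^sup>+ y. g y * F y \<partial>lebn n) = (\<integral>\<^sup>+ x. f x * F (Bm x) \<partial>lebn m))"

end

theory Submission
  imports Defs
begin

text \<open>
  Let i0 be the index with \<theta> i0 > 0 and s = 1 - 1/p; the parameter q i stands for 1/p_i.
  For p = 1 all q i equal 1, every norm on the right is \<integral> f, and the claim reduces to
  \<Sum> \<theta> = 1. For p > 1 we have q i0 < 1, so the norm of g i0 can be bounded by duality,
  testing it against functions h through \<integral> g_i0 h^(1 - q_i0) = \<integral> f (h \<circ> B_i0)^(1 - q_i0).
  Pointwise, f (h \<circ> B_i0)^(1 - q_i0) is the geometric mean, with weights 1/\<theta> i0 and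
  -\<theta> j/\<theta> i0 for j \<noteq> i0, of f F^s and of the functions f (g_j^(1/q_j) \<circ> B_j)^(1 - q_j), where
  F is the Brascamp--Lieb integrand with input h at i0 and g_j^(1/q_j) elsewhere. Hoelder's
  inequality, the pushforward identity \<integral> f (g_j^(1/q_j) \<circ> B_j)^(1 - q_j) = \<integral> g_j^(1/q_j),
  Hoelder with exponents p and p' for \<integral> f F^s and the Brascamp--Lieb inequality for \<integral> F
  bound the test integral by a constant times (\<integral> h)^(1 - q_i0). The resulting bound on the
  norm of g i0 is the claim; the cases where a norm or the constant is 0 or \<infinity> are degenerate.
\<close>

section \<open>Real powers of extended nonnegative reals\<close>

lemma epow_0_right [simp]: "epow a 0 = 1"
  by (simp add: epow_def enn2real_eq_0_iff)

lemma epow_1_right [simp]: "epow a 1 = a"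
  by (cases a) (auto simp: epow_def)

lemma epow_1_left [simp]: "epow 1 r = 1"
  by (simp add: epow_def)

lemma epow_ennreal: "0 < x \<Longrightarrow> epow (ennreal x) r = ennreal (x powr r)"
  by (simp add: epow_def)

lemma epow_0_pos [simp]: "r > 0 \<Longrightarrow> epow 0 r = 0"
  and epow_0_neg [simp]: "r < 0 \<Longrightarrow> epow 0 r = top"
  and epow_top_pos [simp]: "r > 0 \<Longrightarrow> epow top r = top"
  and epow_top_neg [simp]: "r < 0 \<Longrightarrow> epow top r = 0"
  by (simp_all add: epow_def)

lemma epow_eq_0_iff: "r > 0 \<Longrightarrow> epow a r = 0 \<longleftrightarrow> a = 0"
  and epow_eq_top_iff: "r > 0 \<Longrightarrow> epow a r = top \<longleftrightarrow> a = top"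
  and epow_eq_0_iff_neg: "r < 0 \<Longrightarrow> epow a r = 0 \<longleftrightarrow> a = top"
  and epow_eq_top_iff_neg: "r < 0 \<Longrightarrow> epow a r = top \<longleftrightarrow> a = 0"
  by (cases a; auto simp: epow_def)+

lemma ennreal_pos_finite_cases:
  obtains "a = 0" | "a = top" | x where "a = ennreal x" "x > 0"
  by (cases a) (auto simp: less_le)

lemma epow_neq_0_top:
  assumes "a \<noteq> 0" "a \<noteq> top"
  shows "epow a r \<noteq> 0" "epow a r \<noteq> top"
  using assms by (cases a rule: ennreal_pos_finite_cases; simp add: epow_ennreal)+

lemma epow_epow: "epow (epow a r) s = epow a (r * s)"
proof (cases a rule: ennreal_pos_finite_cases)
  case (3 x)
  then show ?thesis
    by (simp add: epow_ennreal powr_powr)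
qed (auto simp: epow_def zero_less_mult_iff mult_less_0_iff)

lemma epow_add:
  assumes "a \<noteq> 0" "a \<noteq> top"
  shows "epow a (r + s) = epow a r * epow a s"
  using assms by (cases a rule: ennreal_pos_finite_cases)
    (auto simp: epow_ennreal powr_add ennreal_mult)

lemma epow_sum:
  assumes "a \<noteq> 0" "a \<noteq> top"
  shows "epow a (\<Sum>i\<in>S. r i) = (\<Prod>i\<in>S. epow a (r i))"
  by (induction S rule: infinite_finite_induct) (simp_all add: epow_add assms)

lemma epow_mult:
  assumes "r \<ge> 0"
  shows "epow (a * b) r = epow a r * epow b r"
proof (cases "r = 0")
  case False
  with assms have r: "r > 0" by simp
  show ?thesis
  proof (cases "a = 0 \<or> b = 0")
    case False
    show ?thesis
    proof (cases "a = top \<or> b = top")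
      case True
      with r False show ?thesis
        by (auto simp: ennreal_mult_top ennreal_top_mult epow_eq_0_iff)
    next
      case not_top: False
      with False obtain x y where "a = ennreal x" "b = ennreal y" "x > 0" "y > 0"
        by (cases a rule: ennreal_pos_finite_cases; cases b rule: ennreal_pos_finite_cases) auto
      then show ?thesis
        by (simp add: epow_ennreal ennreal_mult[symmetric] powr_mult)
    qed
  qed (use r in auto)
qed simp

lemma epow_prod:
  assumes "r \<ge> 0"
  shows "epow (\<Prod>i\<in>S. a i) r = (\<Prod>i\<in>S. epow (a i) r)"
  by (induction S rule: infinite_finite_induct) (simp_all add: epow_mult assms)

lemma epow_mono:
  assumes "r \<ge> 0" "a \<le> b"
  shows "epow a r \<le> epow b r"
proof (cases "r = 0")
  case False
  with assms have r: "r > 0" by simp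
  show ?thesis
  proof (cases "a = 0 \<or> b = top")
    case True
    with r show ?thesis by (elim disjE) simp_all
  next
    case False
    with assms(2) obtain x y where "a = ennreal x" "b = ennreal y" "x > 0" "y \<ge> x"
      by (cases a rule: ennreal_pos_finite_cases; cases b rule: ennreal_pos_finite_cases)
         (simp_all add: top_unique)
    with r show ?thesis
      by (simp add: epow_ennreal ennreal_leI powr_mono2)
  qed
qed simp

lemma borel_measurable_epow [measurable]:
  assumes [measurable]: "f \<in> borel_measurable M"
  shows "(\<lambda>x. epow (f x) r) \<in> borel_measurable M"
  unfolding epow_def by measurable

section \<open>Hoelder's inequality\<close>

lemma weighted_arith_geom_mean:
  fixes x w :: "'i \<Rightarrow> real"
  assumes S: "finite S" and x: "\<And>i. i \<in> S \<Longrightarrow> x i > 0" and w: "\<And>i. i \<in> S \<Longrightarrow> w i \<ge> 0"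
    and ws: "(\<Sum>i\<in>S. w i) = 1"
  shows "(\<Prod>i\<in>S. x i powr w i) \<le> (\<Sum>i\<in>S. w i * x i)"
proof -
  obtain j where j: "j \<in> S" "w j > 0"
    using w ws sum.neutral[of S w] by (metis less_eq_real_def zero_neq_one)
  have "0 < w j * x j"
    using j x by simp
  also have "w j * x j \<le> (\<Sum>i\<in>S. w i * x i)"
  proof (rule member_le_sum[OF j(1) _ S])
    show "0 \<le> w i * x i" if "i \<in> S - {j}" for i
      using that x[of i] w[of i] by simp
  qed
  finally have pos: "(\<Sum>i\<in>S. w i * x i) > 0" .
  have "(\<Sum>i\<in>S. w i * ln (x i)) \<le> ln (\<Sum>i\<in>S. w i *\<^sub>R x i)"
    using j x w by (intro concave_on_sum[OF S _ ln_concave ws]) auto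
  with pos have "exp (\<Sum>i\<in>S. w i * ln (x i)) \<le> (\<Sum>i\<in>S. w i * x i)"
    by (simp add: ln_ge_iff)
  moreover have "exp (\<Sum>i\<in>S. w i * ln (x i)) = (\<Prod>i\<in>S. x i powr w i)"
    unfolding exp_sum[OF S] using x by (intro prod.cong refl) (force simp: powr_def)
  ultimately show ?thesis
    by simp
qed

lemma ennreal_weighted_arith_geom_mean:
  fixes a :: "'i \<Rightarrow> ennreal"
  assumes S: "finite S" and w: "\<And>i. i \<in> S \<Longrightarrow> w i > 0" and ws: "(\<Sum>i\<in>S. w i) = 1"
  shows "(\<Prod>i\<in>S. epow (a i) (w i)) \<le> (\<Sum>i\<in>S. ennreal (w i) * a i)"
proof (cases "\<exists>j\<in>S. a j = 0")
  case True
  then obtain j where "j \<in> S" "a j = 0"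
    by blast
  with w have "epow (a j) (w j) = 0"
    by simp
  with S \<open>j \<in> S\<close> have "(\<Prod>i\<in>S. epow (a i) (w i)) = 0"
    by (intro prod_zero) auto
  then show ?thesis
    by (metis zero_le)
next
  case no_zero: False
  show ?thesis
  proof (cases "\<exists>j\<in>S. a j = top")
    case True
    then obtain j where "j \<in> S" "a j = top"
      by blast
    have "ennreal (w j) * a j = top"
      using w[OF \<open>j \<in> S\<close>] \<open>a j = top\<close> by (simp add: ennreal_mult_top)
    with S \<open>j \<in> S\<close> have "(\<Sum>i\<in>S. ennreal (w i) * a i) = top"
      by (auto simp: ennreal_sum_eq_top)
    then show ?thesis
      by simp
  next
    case False
    define x where "x i = enn2real (a i)" for i
    have x: "a i = ennreal (x i) \<and> x i > 0" if "i \<in> S" for i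
      using no_zero False that unfolding x_def
      by (cases "a i" rule: ennreal_pos_finite_cases) auto
    then have "(\<Prod>i\<in>S. epow (a i) (w i)) = ennreal (\<Prod>i\<in>S. x i powr w i)"
      by (simp add: epow_ennreal prod_ennreal)
    also have "\<dots> \<le> ennreal (\<Sum>i\<in>S. w i * x i)"
      using x w by (intro ennreal_leI weighted_arith_geom_mean[OF S _ _ ws]) (auto intro: less_imp_le)
    also have "\<dots> = (\<Sum>i\<in>S. ennreal (w i) * a i)"
      using x w by (simp add: sum_ennreal[symmetric] ennreal_mult less_imp_le)
    finally show ?thesis .
  qed
qed

lemma prod_epow_le_rescaled_sum:
  fixes a I :: "'i \<Rightarrow> ennreal"
  assumes S: "finite S" and w: "\<And>i. i \<in> S \<Longrightarrow> w i > 0" and ws: "(\<Sum>i\<in>S. w i) = 1"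
    and I: "\<And>i. i \<in> S \<Longrightarrow> I i \<noteq> 0 \<and> I i \<noteq> top"
  shows "(\<Prod>i\<in>S. epow (a i) (w i))
    \<le> (\<Prod>i\<in>S. epow (I i) (w i)) * (\<Sum>i\<in>S. ennreal (w i) * (a i / I i))"
proof -
  have "a i = I i * (a i / I i)" if "i \<in> S" for i
    using mult_divide_eq_ennreal[of "I i" "a i"] I[OF that]
    by (simp add: ennreal_times_divide mult.commute)
  then have "(\<Prod>i\<in>S. epow (a i) (w i)) = (\<Prod>i\<in>S. epow (I i) (w i)) * (\<Prod>i\<in>S. epow (a i / I i) (w i))"
    unfolding prod.distrib[symmetric] by (intro prod.cong refl) (metis epow_mult w less_imp_le)
  also have "\<dots> \<le> (\<Prod>i\<in>S. epow (I i) (w i)) * (\<Sum>i\<in>S. ennreal (w i) * (a i / I i))"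
    by (intro mult_left_mono ennreal_weighted_arith_geom_mean[OF S w ws]) auto
  finally show ?thesis .
qed

lemma nn_integral_prod_epow_le_pos:
  fixes F :: "'i \<Rightarrow> 'a \<Rightarrow> ennreal"
  assumes S: "finite S" and F[measurable]: "\<And>i. i \<in> S \<Longrightarrow> F i \<in> borel_measurable M"
    and w: "\<And>i. i \<in> S \<Longrightarrow> w i > 0" and ws: "(\<Sum>i\<in>S. w i) = 1"
  shows "(\<integral>\<^sup>+x. (\<Prod>i\<in>S. epow (F i x) (w i)) \<partial>M) \<le> (\<Prod>i\<in>S. epow (\<integral>\<^sup>+x. F i x \<partial>M) (w i))"
proof (cases "\<exists>j\<in>S. (\<integral>\<^sup>+x. F j x \<partial>M) = 0")
  case True
  then obtain j where j: "j \<in> S" "(\<integral>\<^sup>+x. F j x \<partial>M) = 0"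
    by blast
  then have "AE x in M. F j x = 0"
    by (simp add: nn_integral_0_iff_AE)
  then have "AE x in M. (\<Prod>i\<in>S. epow (F i x) (w i)) = 0"
    by eventually_elim (use j w S in \<open>auto intro!: prod_zero bexI[of _ j]\<close>)
  then have "(\<integral>\<^sup>+x. (\<Prod>i\<in>S. epow (F i x) (w i)) \<partial>M) = 0"
    by (simp add: nn_integral_0_iff_AE)
  then show ?thesis
    by simp
next
  case no_zero: False
  show ?thesis
  proof (cases "\<exists>j\<in>S. (\<integral>\<^sup>+x. F j x \<partial>M) = top")
    case True
    with no_zero w S have "(\<Prod>i\<in>S. epow (\<integral>\<^sup>+x. F i x \<partial>M) (w i)) = top"
      by (auto simp: ennreal_prod_eq_top epow_eq_0_iff epow_eq_top_iff)
    then show ?thesis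
      by simp
  next
    case False
    define I where "I i = (\<integral>\<^sup>+x. F i x \<partial>M)" for i
    have I: "I i \<noteq> 0 \<and> I i \<noteq> top" if "i \<in> S" for i
      using no_zero False that by (auto simp: I_def)
    have "(\<integral>\<^sup>+x. (\<Prod>i\<in>S. epow (F i x) (w i)) \<partial>M)
        \<le> (\<integral>\<^sup>+x. (\<Prod>i\<in>S. epow (I i) (w i)) * (\<Sum>i\<in>S. ennreal (w i) * (F i x / I i)) \<partial>M)"
      by (intro nn_integral_mono prod_epow_le_rescaled_sum[OF S w ws I])
    also have "\<dots> = (\<Prod>i\<in>S. epow (I i) (w i)) * (\<Sum>i\<in>S. ennreal (w i) * (I i / I i))"
      by (simp add: nn_integral_cmult nn_integral_sum nn_integral_divide I_def)
    also have "(\<Sum>i\<in>S. ennreal (w i) * (I i / I i)) = 1"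
      using I w ws by (simp add: sum_ennreal less_imp_le less_top)
    finally show ?thesis
      by (simp add: I_def)
  qed
qed

lemma nn_integral_prod_epow_le:
  fixes F :: "'i \<Rightarrow> 'a \<Rightarrow> ennreal"
  assumes S: "finite S" and F: "\<And>i. i \<in> S \<Longrightarrow> F i \<in> borel_measurable M"
    and w: "\<And>i. i \<in> S \<Longrightarrow> w i \<ge> 0" and ws: "(\<Sum>i\<in>S. w i) = 1"
  shows "(\<integral>\<^sup>+x. (\<Prod>i\<in>S. epow (F i x) (w i)) \<partial>M) \<le> (\<Prod>i\<in>S. epow (\<integral>\<^sup>+x. F i x \<partial>M) (w i))"
proof -
  define S' where "S' = {i\<in>S. w i > 0}"
  have drop_zero_weights: "(\<Prod>i\<in>S. epow (G i) (w i)) = (\<Prod>i\<in>S'. epow (G i) (w i))" for G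
    using S w by (intro prod.mono_neutral_right) (auto simp: S'_def less_le)
  have "(\<Sum>i\<in>S'. w i) = (\<Sum>i\<in>S. w i)"
    using S w by (intro sum.mono_neutral_left) (auto simp: S'_def less_le)
  with S F ws show ?thesis
    unfolding drop_zero_weights by (intro nn_integral_prod_epow_le_pos) (auto simp: S'_def)
qed

lemma nn_integral_mult_epow_le_Lnorm_inv:
  assumes p: "p \<ge> 1" and [measurable]: "f \<in> borel_measurable M" "F \<in> borel_measurable M"
  shows "(\<integral>\<^sup>+x. f x * epow (F x) (1 - 1/p) \<partial>M)
           \<le> Lnorm_inv M (1/p) f * epow (\<integral>\<^sup>+x. F x \<partial>M) (1 - 1/p)"
proof -
  define G where "G b = (if b then (\<lambda>x. epow (f x) p) else F)" for b
  define w where "w b = (if b then 1/p else 1 - 1/p)" for b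
  have "(\<integral>\<^sup>+x. (\<Prod>b\<in>UNIV. epow (G b x) (w b)) \<partial>M) \<le> (\<Prod>b\<in>UNIV. epow (\<integral>\<^sup>+x. G b x \<partial>M) (w b))"
    using p by (intro nn_integral_prod_epow_le) (auto simp: G_def w_def UNIV_bool)
  moreover have "(\<Prod>b\<in>UNIV. epow (G b x) (w b)) = f x * epow (F x) (1 - 1/p)" for x
    using p by (simp add: UNIV_bool G_def w_def epow_epow mult.commute)
  moreover have "(\<Prod>b\<in>UNIV. epow (\<integral>\<^sup>+x. G b x \<partial>M) (w b))
      = Lnorm_inv M (1/p) f * epow (\<integral>\<^sup>+x. F x \<partial>M) (1 - 1/p)"
    using p by (simp add: UNIV_bool G_def w_def Lnorm_inv_def mult.commute)
  ultimately show ?thesis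
    by simp
qed

section \<open>Bounding the norm by duality\<close>

lemma epow_mult_epow_complement:
  assumes "0 < q" "q < 1"
  shows "epow t q * epow t (1 - q) = t"
  using assms by (cases t rule: ennreal_pos_finite_cases) (simp_all add: epow_add[symmetric])

lemma mult_epow_epow_inverse:
  assumes "q \<noteq> 0" "epow a (1/q) \<noteq> top"
  shows "a * epow (epow a (1/q)) (1 - q) = epow a (1/q)"
proof (cases a rule: ennreal_pos_finite_cases)
  case (3 x)
  have "x * x powr ((1 - q)/q) = x powr (1 + (1 - q)/q)"
    using 3 by (simp add: powr_add)
  also have "\<dots> = x powr (1/q)"
    using assms(1) by (simp add: field_simps)
  finally show ?thesis
    unfolding epow_epow using 3 by (simp add: epow_ennreal ennreal_mult[symmetric])
next
  case 1
  with assms have "q > 0"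
    by (cases "q > 0") (auto simp: linorder_neq_iff)
  with 1 show ?thesis
    by simp
next
  case 2
  with assms have "q < 0"
    by (cases "q < 0") (auto simp: linorder_neq_iff)
  with 2 show ?thesis
    by (simp add: epow_epow divide_neg_pos)
qed

lemma epow_le_of_le_mult_epow:
  assumes J: "J \<noteq> 0" "J \<noteq> top" and le: "J \<le> B * epow J (1 - q)"
  shows "epow J q \<le> B"
proof -
  have "epow J (1 - q) * epow J q = J"
    using J by (simp add: epow_add[symmetric])
  with le have "epow J (1 - q) * epow J q \<le> epow J (1 - q) * B"
    by (simp add: mult.commute)
  with epow_neq_0_top[OF J] show ?thesis
    by (simp add: ennreal_mult_le_mult_iff)
qed

lemma AE_noteq_top_of_nn_integral:
  "u \<in> borel_measurable M \<Longrightarrow> (\<integral>\<^sup>+x. u x \<partial>M) \<noteq> top \<Longrightarrow> AE x in M. u x \<noteq> top"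
  using nn_integral_noteq_infinite[of u M] by simp

text \<open>The strictly positive integrable weight \<open>w\<close> supplies the admissible test functions:
  truncations \<open>min (g\<^bsup>1/q\<^esup>) (n w)\<close> and restrictions of \<open>w\<close> to sets.\<close>

locale Lnorm_inv_duality =
  fixes M :: "'a measure" and g w :: "'a \<Rightarrow> ennreal" and q :: real and B :: ennreal
  assumes g [measurable]: "g \<in> borel_measurable M"
    and w [measurable]: "w \<in> borel_measurable M"
    and w_integral_finite: "(\<integral>\<^sup>+x. w x \<partial>M) \<noteq> top"
    and w_pos: "\<And>x. x \<in> space M \<Longrightarrow> 0 < w x \<and> w x < top"
    and space_nonnull: "emeasure M (space M) \<noteq> 0"
    and dual_bound: "\<And>h. h \<in> borel_measurable M \<Longrightarrow> (\<integral>\<^sup>+x. h x \<partial>M) \<noteq> 0 \<Longrightarrow>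
      (\<integral>\<^sup>+x. h x \<partial>M) \<noteq> top \<Longrightarrow>
      (\<integral>\<^sup>+x. g x * epow (h x) (1 - q) \<partial>M) \<le> B * epow (\<integral>\<^sup>+x. h x \<partial>M) (1 - q)"
begin

lemma w_integral_nonzero: "(\<integral>\<^sup>+x. w x \<partial>M) \<noteq> 0"
proof
  assume "(\<integral>\<^sup>+x. w x \<partial>M) = 0"
  then have "AE x in M. w x = 0"
    by (simp add: nn_integral_0_iff_AE)
  moreover have "AE x in M. w x \<noteq> 0"
    using w_pos by (intro AE_I2) (metis less_irrefl)
  ultimately have "AE x in M. False"
    by eventually_elim simp
  with space_nonnull show False
    using ae_filter_eq_bot_iff[of M] by (simp add: eventually_False)
qed

lemma nn_integral_le_of_le_epow:
  assumes q: "0 < q" "q < 1" and h [measurable]: "h \<in> borel_measurable M"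
    and h_finite: "(\<integral>\<^sup>+x. h x \<partial>M) \<noteq> top" and h_le: "\<And>x. h x \<le> epow (g x) (1/q)"
  shows "(\<integral>\<^sup>+x. h x \<partial>M) \<le> epow B (1/q)"
proof (cases "(\<integral>\<^sup>+x. h x \<partial>M) = 0")
  case False
  have "h x \<le> g x * epow (h x) (1 - q)" for x
  proof -
    have "epow (h x) q \<le> epow (epow (g x) (1/q)) q"
      using q h_le by (intro epow_mono) auto
    with q have "epow (h x) q \<le> g x"
      by (simp add: epow_epow)
    then show ?thesis
      using epow_mult_epow_complement[OF q, of "h x"] by (metis mult_right_mono zero_le)
  qed
  then have "(\<integral>\<^sup>+x. h x \<partial>M) \<le> B * epow (\<integral>\<^sup>+x. h x \<partial>M) (1 - q)"
    by (intro order_trans[OF nn_integral_mono dual_bound] False h_finite h) auto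
  with False h_finite have "epow (\<integral>\<^sup>+x. h x \<partial>M) q \<le> B"
    by (intro epow_le_of_le_mult_epow)
  then have "epow (epow (\<integral>\<^sup>+x. h x \<partial>M) q) (1/q) \<le> epow B (1/q)"
    using q by (intro epow_mono) auto
  with q show ?thesis
    by (simp add: epow_epow)
qed simp

lemma Lnorm_inv_le_pos:
  assumes q: "0 < q" "q < 1"
  shows "Lnorm_inv M q g \<le> B"
proof -
  define G where "G x = epow (g x) (1/q)" for x
  define h where "h n x = min (G x) (of_nat n * w x)" for n x
  have G [measurable]: "G \<in> borel_measurable M" and h [measurable]: "h n \<in> borel_measurable M" for n
    unfolding G_def h_def by measurable
  have h_finite: "(\<integral>\<^sup>+x. h n x \<partial>M) < top" for n
  proof -
    have "(\<integral>\<^sup>+x. h n x \<partial>M) \<le> (\<integral>\<^sup>+x. of_nat n * w x \<partial>M)"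
      by (intro nn_integral_mono) (simp add: h_def)
    also have "\<dots> < top"
      using w_integral_finite by (simp add: nn_integral_cmult ennreal_mult_less_top less_top of_nat_less_top)
    finally show ?thesis .
  qed
  have "(\<integral>\<^sup>+x. h n x \<partial>M) \<le> epow B (1/q)" for n
    using h_finite[of n] by (intro nn_integral_le_of_le_epow[OF q h]) (auto simp: h_def G_def)
  moreover have "(SUP n. h n x) = G x" if "x \<in> space M" for x
  proof -
    have "w x \<noteq> 0"
      using w_pos[OF that] by (metis less_irrefl)
    then have unbounded: "(SUP n. of_nat n * w x) = top"
      by (simp add: SUP_mult_right_ennreal[symmetric] ennreal_SUP_of_nat_eq_top ennreal_top_mult)
    have "(SUP n. h n x) = inf (G x) (SUP n. of_nat n * w x)"
      unfolding h_def inf_min[symmetric] by (rule inf_SUP[symmetric])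
    then show ?thesis
      unfolding unbounded by simp
  qed
  then have "(\<integral>\<^sup>+x. G x \<partial>M) = (SUP n. \<integral>\<^sup>+x. h n x \<partial>M)"
    by (simp add: nn_integral_monotone_convergence_SUP[symmetric] incseq_def le_fun_def
        h_def min.coboundedI2 mult_right_mono cong: nn_integral_cong)
  ultimately have "(\<integral>\<^sup>+x. G x \<partial>M) \<le> epow B (1/q)"
    by (simp add: SUP_least)
  then have "epow (\<integral>\<^sup>+x. G x \<partial>M) q \<le> epow (epow B (1/q)) q"
    using q by (intro epow_mono) auto
  with q show ?thesis
    by (simp add: Lnorm_inv_def G_def epow_epow)
qed

lemma Lnorm_inv_le_zero:
  assumes q: "q = 0"
  shows "Lnorm_inv M q g \<le> B"
proof (rule ccontr)
  assume "\<not> ?thesis"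
  with q obtain z where z: "B < z" "z < esssup M g"
    by (metis Lnorm_inv_def dense not_le)
  define E where "E = {x \<in> space M. z < g x}"
  define h where "h x = w x * indicator E x" for x
  have E [measurable]: "E \<in> sets M" and h [measurable]: "h \<in> borel_measurable M"
    unfolding E_def h_def by measurable
  have "(\<integral>\<^sup>+x. h x \<partial>M) \<le> (\<integral>\<^sup>+x. w x \<partial>M)"
    unfolding h_def by (intro nn_integral_mono) (simp add: indicator_def)
  with w_integral_finite have h_finite: "(\<integral>\<^sup>+x. h x \<partial>M) \<noteq> top"
    by (auto simp: top_unique)
  have "{x \<in> space M. h x \<noteq> 0} = E"
    by (auto simp: h_def E_def split: split_indicator dest: w_pos)
  with esssup_pos_measure[OF g z(2)] have h_nonzero: "(\<integral>\<^sup>+x. h x \<partial>M) \<noteq> 0"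
    by (simp add: nn_integral_0_iff E_def)
  have "(\<integral>\<^sup>+x. z * h x \<partial>M) \<le> (\<integral>\<^sup>+x. g x * epow (h x) (1 - q) \<partial>M)"
    using q by (intro nn_integral_mono) (auto simp: h_def E_def indicator_def mult_right_mono)
  also have "\<dots> \<le> B * (\<integral>\<^sup>+x. h x \<partial>M)"
    using dual_bound[OF h h_nonzero h_finite] q by simp
  finally have "(\<integral>\<^sup>+x. h x \<partial>M) * z \<le> (\<integral>\<^sup>+x. h x \<partial>M) * B"
    by (simp add: nn_integral_cmult mult.commute)
  with h_nonzero h_finite have "z \<le> B"
    by (simp add: ennreal_mult_le_mult_iff)
  with z(1) show False
    by simp
qed

lemma bound_eq_top_if_AE_top:
  assumes q: "q < 1" and g_top: "AE x in M. g x = top"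
  shows "B = top"
proof -
  have "AE x in M. g x * epow (w x) (1 - q) = top"
    using g_top
  proof (rule AE_mp, intro AE_I2 impI)
    fix x assume "x \<in> space M" "g x = top"
    with q w_pos[of x] show "g x * epow (w x) (1 - q) = top"
      by (auto simp: epow_eq_0_iff ennreal_top_mult)
  qed
  then have "(\<integral>\<^sup>+x. g x * epow (w x) (1 - q) \<partial>M) = top"
    using space_nonnull by (simp add: nn_integral_cong_AE ennreal_top_mult)
  with dual_bound[OF w w_integral_nonzero w_integral_finite]
  have "B * epow (\<integral>\<^sup>+x. w x \<partial>M) (1 - q) = top"
    by (simp add: top_unique)
  with q w_integral_finite show "B = top"
    by (simp add: ennreal_mult_eq_top_iff epow_eq_top_iff)
qed

lemma Lnorm_inv_le_neg:
  assumes q: "q < 0"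
  shows "Lnorm_inv M q g \<le> B"
proof -
  define G where "G x = epow (g x) (1/q)" for x
  have G [measurable]: "G \<in> borel_measurable M"
    unfolding G_def by measurable
  define I where "I = (\<integral>\<^sup>+x. G x \<partial>M)"
  have Lnorm: "Lnorm_inv M q g = epow I q"
    using q by (simp add: Lnorm_inv_def I_def G_def)
  consider "I = top" | "I = 0" | "I \<noteq> 0" "I \<noteq> top"
    by blast
  then show ?thesis
  proof cases
    case 1
    with q show ?thesis
      by (simp add: Lnorm)
  next
    case 2
    then have "AE x in M. G x = 0"
      by (simp add: I_def nn_integral_0_iff_AE)
    with q have "AE x in M. g x = top"
      by (auto simp: G_def epow_eq_0_iff_neg elim!: AE_mp)
    with q have "B = top"
      by (intro bound_eq_top_if_AE_top) auto
    then show ?thesis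
      by simp
  next
    case 3
    then have "AE x in M. G x \<noteq> top"
      by (intro AE_noteq_top_of_nn_integral) (simp_all add: I_def)
    then have "(\<integral>\<^sup>+x. g x * epow (G x) (1 - q) \<partial>M) = I"
      unfolding I_def using q
      by (intro nn_integral_cong_AE) (auto simp: G_def mult_epow_epow_inverse elim!: AE_mp)
    with dual_bound[OF G] 3 have "I \<le> B * epow I (1 - q)"
      by (simp add: I_def)
    with 3 show ?thesis
      unfolding Lnorm by (intro epow_le_of_le_mult_epow)
  qed
qed

lemma Lnorm_inv_le:
  assumes "q < 1"
  shows "Lnorm_inv M q g \<le> B"
  using assms Lnorm_inv_le_pos Lnorm_inv_le_zero Lnorm_inv_le_neg by (metis linorder_neqE_linordered_idom)

end

lemma Lnorm_inv_le_by_duality: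
  assumes "sigma_finite_measure M" "emeasure M (space M) \<noteq> 0"
    and "g \<in> borel_measurable M" "q < 1"
    and "\<And>h. h \<in> borel_measurable M \<Longrightarrow> (\<integral>\<^sup>+x. h x \<partial>M) \<noteq> 0 \<Longrightarrow> (\<integral>\<^sup>+x. h x \<partial>M) \<noteq> top \<Longrightarrow>
      (\<integral>\<^sup>+x. g x * epow (h x) (1 - q) \<partial>M) \<le> B * epow (\<integral>\<^sup>+x. h x \<partial>M) (1 - q)"
  shows "Lnorm_inv M q g \<le> B"
proof -
  obtain w where "w \<in> borel_measurable M" "(\<integral>\<^sup>+x. w x \<partial>M) \<noteq> top"
    "\<forall>x\<in>space M. 0 < w x \<and> w x < top"
    using sigma_finite_measure.Ex_finite_integrable_function[OF assms(1)] by auto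
  then interpret Lnorm_inv_duality M g w q B
    using assms by unfold_locales auto
  show ?thesis
    using \<open>q < 1\<close> by (rule Lnorm_inv_le)
qed

section \<open>Lebesgue measure, pushforwards and the Brascamp--Lieb constant\<close>

lemma sigma_finite_lebn: "sigma_finite_measure (lebn n)"
proof -
  interpret product_sigma_finite "\<lambda>_. lborel :: real measure"
    by standard
  show ?thesis
    unfolding lebn_def by (rule sigma_finite) simp
qed

lemma emeasure_space_lebn_neq_0: "emeasure (lebn n) (space (lebn n)) \<noteq> 0"
proof -
  interpret product_sigma_finite "\<lambda>_. lborel :: real measure"
    by standard
  have "emeasure (lebn n) (space (lebn n)) = (\<Prod>i\<in>{..<n}. emeasure lborel (UNIV :: real set))"
    unfolding lebn_def by (simp add: space_PiM emeasure_PiM)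
  then show ?thesis
    by simp
qed

lemma measurable_matapp [measurable]: "matapp n m M \<in> lebn m \<rightarrow>\<^sub>M lebn n"
  unfolding matapp_def lebn_def by measurable

lemma Lnorm_inv_eq_0:
  assumes sp: "emeasure M (space M) \<noteq> 0" and g [measurable]: "g \<in> borel_measurable M"
    and zero: "AE x in M. g x = 0"
  shows "Lnorm_inv M q g = 0"
proof -
  consider "q > 0" | "q = 0" | "q < 0"
    by linarith
  then show ?thesis
  proof cases
    case 1
    have "(\<integral>\<^sup>+x. epow (g x) (1/q) \<partial>M) = 0"
      using zero 1 by (auto simp: nn_integral_0_iff_AE elim!: AE_mp)
    with 1 show ?thesis
      by (simp add: Lnorm_inv_def)
  next
    case 2
    have "esssup M g \<le> 0"
      using zero by (intro esssup_I[OF g]) (auto elim: AE_mp)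
    with 2 show ?thesis
      by (simp add: Lnorm_inv_def)
  next
    case 3
    have "(\<integral>\<^sup>+x. epow (g x) (1/q) \<partial>M) = (\<integral>\<^sup>+x. top \<partial>M)"
      using zero 3 by (intro nn_integral_cong_AE) (auto elim: AE_mp)
    also have "\<dots> = top"
      using sp by (simp add: ennreal_top_mult)
    finally show ?thesis
      using 3 by (simp add: Lnorm_inv_def)
  qed
qed

lemma is_pushforward_measurable:
  "is_pushforward m n A f g \<Longrightarrow> g \<in> borel_measurable (lebn n)"
  by (simp add: is_pushforward_def)

lemma is_pushforward_nn_integral:
  "is_pushforward m n A f g \<Longrightarrow> F \<in> borel_measurable (lebn n) \<Longrightarrow>
    (\<integral>\<^sup>+x. f x * F (A x) \<partial>lebn m) = (\<integral>\<^sup>+y. g y * F y \<partial>lebn n)"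
  by (simp add: is_pushforward_def)

lemma is_pushforward_nn_integral_eq:
  "is_pushforward m n A f g \<Longrightarrow> (\<integral>\<^sup>+y. g y \<partial>lebn n) = (\<integral>\<^sup>+x. f x \<partial>lebn m)"
  using is_pushforward_nn_integral[of m n A f g "\<lambda>_. 1"] by simp

lemma is_pushforward_AE:
  assumes push: "is_pushforward m n A f g"
    and [measurable]: "A \<in> lebn m \<rightarrow>\<^sub>M lebn n" "f \<in> borel_measurable (lebn m)" "S \<in> sets borel"
    and AE_S: "AE y in lebn n. g y = 0 \<or> g y \<in> S"
  shows "AE x in lebn m. f x = 0 \<or> g (A x) \<in> S"
proof -
  have [measurable]: "g \<in> borel_measurable (lebn n)"
    using push by (rule is_pushforward_measurable)
  define F where "F y = (if g y \<in> S then 0 else 1 :: ennreal)" for y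
  have [measurable]: "F \<in> borel_measurable (lebn n)"
    unfolding F_def by measurable
  have "(\<integral>\<^sup>+x. f x * F (A x) \<partial>lebn m) = (\<integral>\<^sup>+y. g y * F y \<partial>lebn n)"
    using push by (rule is_pushforward_nn_integral) measurable
  also have "\<dots> = 0"
    using AE_S by (auto simp: nn_integral_0_iff_AE F_def elim!: AE_mp)
  finally have "AE x in lebn m. f x * F (A x) = 0"
    by (simp add: nn_integral_0_iff_AE)
  then show ?thesis
    by (rule AE_mp) (simp add: F_def)
qed

lemma le_Inf_mult_ennreal:
  fixes X R :: ennreal
  assumes "\<And>C. C \<in> S \<Longrightarrow> X \<le> C * R" "R \<noteq> 0" "R \<noteq> top"
  shows "X \<le> Inf S * R"
proof -
  have "X / R \<le> Inf S"
    using assms by (intro Inf_greatest divide_le_posI_ennreal) (auto simp: mult.commute zero_less_iff_neq_zero)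
  then have "X / R * R \<le> Inf S * R"
    by (rule mult_right_mono) simp
  with assms(2,3) show ?thesis
    by (simp add: ennreal_divide_times less_top)
qed

lemma nn_integral_le_BL:
  assumes h: "\<And>i. i \<in> {1..k} \<Longrightarrow> h i \<in> borel_measurable (lebn (dd i))"
    and h_pos: "\<And>i. i \<in> {1..k} \<Longrightarrow> (\<integral>\<^sup>+y. h i y \<partial>lebn (dd i)) \<noteq> 0"
    and h_finite: "\<And>i. i \<in> {1..k} \<Longrightarrow> (\<integral>\<^sup>+y. h i y \<partial>lebn (dd i)) \<noteq> top"
  shows "(\<integral>\<^sup>+x. (\<Prod>i\<in>{1..k}. epow (h i (matapp (dd i) d (B i) x)) (c i)) \<partial>lebn d)
           \<le> BL d k dd B c * (\<Prod>i\<in>{1..k}. epow (\<integral>\<^sup>+y. h i y \<partial>lebn (dd i)) (c i))"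
  unfolding BL_def
proof (rule le_Inf_mult_ennreal)
  show "(\<Prod>i\<in>{1..k}. epow (\<integral>\<^sup>+y. h i y \<partial>lebn (dd i)) (c i)) \<noteq> 0"
    "(\<Prod>i\<in>{1..k}. epow (\<integral>\<^sup>+y. h i y \<partial>lebn (dd i)) (c i)) \<noteq> top"
    using epow_neq_0_top[OF h_pos h_finite] by (auto simp: ennreal_prod_eq_top)
  show "(\<integral>\<^sup>+x. (\<Prod>i\<in>{1..k}. epow (h i (matapp (dd i) d (B i) x)) (c i)) \<partial>lebn d)
      \<le> C * (\<Prod>i\<in>{1..k}. epow (\<integral>\<^sup>+y. h i y \<partial>lebn (dd i)) (c i))"
    if "C \<in> {C. \<forall>f. (\<forall>i\<in>{1..k}. f i \<in> borel_measurable (lebn (dd i))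
                   \<and> (\<integral>\<^sup>+ y. f i y \<partial>lebn (dd i)) < \<infinity>) \<longrightarrow>
        (\<integral>\<^sup>+ x. (\<Prod>i\<in>{1..k}. epow (f i (matapp (dd i) d (B i) x)) (c i)) \<partial>lebn d)
          \<le> C * (\<Prod>i\<in>{1..k}. epow (\<integral>\<^sup>+ y. f i y \<partial>lebn (dd i)) (c i))}" for C
    using that h h_finite by (auto simp: less_top)
qed

section \<open>The adjoint Brascamp--Lieb inequality\<close>

lemma epow_weighted_product_eq:
  fixes \<phi> t :: ennreal and \<eta> :: "'i \<Rightarrow> ennreal" and c b w :: "'i \<Rightarrow> real"
  assumes \<phi>: "\<phi> \<noteq> 0" "\<phi> \<noteq> top" and \<eta>: "\<And>j. j \<in> J \<Longrightarrow> \<eta> j \<noteq> 0 \<and> \<eta> j \<noteq> top"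
    and \<theta>: "\<theta> > 0" and s: "s \<ge> 0" and w: "\<And>j. j \<in> J \<Longrightarrow> w j \<ge> 0"
    and bw: "\<And>j. j \<in> J \<Longrightarrow> b j * w j = - c j * s / \<theta>"
    and ws: "1/\<theta> + (\<Sum>j\<in>J. w j) = 1"
  shows "epow (\<phi> * epow (epow t c0 * (\<Prod>j\<in>J. epow (\<eta> j) (c j))) s) (1/\<theta>)
           * (\<Prod>j\<in>J. epow (\<phi> * epow (\<eta> j) (b j)) (w j))
         = \<phi> * epow t (c0 * s / \<theta>)"
proof -
  have split_first: "epow (\<phi> * epow (epow t c0 * (\<Prod>j\<in>J. epow (\<eta> j) (c j))) s) (1/\<theta>)
      = epow \<phi> (1/\<theta>) * epow t (c0 * s / \<theta>) * (\<Prod>j\<in>J. epow (\<eta> j) (c j * s / \<theta>))"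
    using \<theta> s by (simp add: epow_mult epow_prod epow_epow) (simp only: mult.assoc)
  have split_rest: "(\<Prod>j\<in>J. epow (\<phi> * epow (\<eta> j) (b j)) (w j))
      = (\<Prod>j\<in>J. epow \<phi> (w j)) * (\<Prod>j\<in>J. epow (\<eta> j) (b j * w j))"
    using w by (simp add: epow_mult epow_epow prod.distrib)
  have \<phi>_part: "epow \<phi> (1/\<theta>) * (\<Prod>j\<in>J. epow \<phi> (w j)) = \<phi>"
    using \<phi> ws by (simp add: epow_sum[symmetric] epow_add[symmetric])
  have \<eta>_part: "(\<Prod>j\<in>J. epow (\<eta> j) (c j * s / \<theta>)) * (\<Prod>j\<in>J. epow (\<eta> j) (b j * w j)) = 1"
    using \<eta> bw by (simp add: prod.distrib[symmetric] epow_add[symmetric])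
  have regroup: "a * x * p1 * (p2 * p3) = (a * p2) * x * (p1 * p3)" for a x p1 p2 p3 :: ennreal
    by (simp only: ac_simps)
  show ?thesis
    unfolding split_first split_rest regroup \<phi>_part \<eta>_part by simp
qed

locale adjoint_BL =
  fixes d k :: nat and dd :: "nat \<Rightarrow> nat" and B :: "nat \<Rightarrow> nat \<Rightarrow> nat \<Rightarrow> real"
    and c \<theta> :: "nat \<Rightarrow> real" and p :: real and q :: "nat \<Rightarrow> real"
    and f :: "(nat \<Rightarrow> real) \<Rightarrow> ennreal" and g :: "nat \<Rightarrow> (nat \<Rightarrow> real) \<Rightarrow> ennreal"
    and i0 :: nat
  assumes c_pos: "\<And>i. i \<in> {1..k} \<Longrightarrow> c i > 0"
    and p_ge: "p \<ge> 1"
    and theta_sum: "(\<Sum>i\<in>{1..k}. \<theta> i) = 1"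
    and i0: "i0 \<in> {1..k}" "\<theta> i0 > 0"
    and theta_neg: "\<And>i. i \<in> {1..k} \<Longrightarrow> i \<noteq> i0 \<Longrightarrow> \<theta> i < 0"
    and q_def: "\<And>i. i \<in> {1..k} \<Longrightarrow> c i * (1 - 1/p) = \<theta> i * (1 - q i)"
    and f [measurable]: "f \<in> borel_measurable (lebn d)"
    and g_push: "\<And>i. i \<in> {1..k} \<Longrightarrow> is_pushforward d (dd i) (matapp (dd i) d (B i)) f (g i)"
begin

abbreviation "K \<equiv> {1..k}"
abbreviation "J \<equiv> {1..k} - {i0}"
abbreviation "A i \<equiv> matapp (dd i) d (B i)"
abbreviation "N i \<equiv> Lnorm_inv (lebn (dd i)) (q i) (g i)"
abbreviation "I j \<equiv> \<integral>\<^sup>+y. epow (g j y) (1 / q j) \<partial>lebn (dd j)"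

lemma g_measurable [measurable]: "i \<in> K \<Longrightarrow> g i \<in> borel_measurable (lebn (dd i))"
  using g_push by (rule is_pushforward_measurable)

lemma nn_integral_g: "i \<in> K \<Longrightarrow> (\<integral>\<^sup>+y. g i y \<partial>lebn (dd i)) = (\<integral>\<^sup>+x. f x \<partial>lebn d)"
  using g_push by (rule is_pushforward_nn_integral_eq)

lemma prod_K_split: "(\<Prod>i\<in>K. X i) = X i0 * (\<Prod>j\<in>J. X j)"
  using i0(1) by (simp add: prod.remove)

lemma weights_sum: "1 / \<theta> i0 + (\<Sum>j\<in>J. - \<theta> j / \<theta> i0) = 1"
proof -
  have "(\<Sum>j\<in>J. \<theta> j) = 1 - \<theta> i0"
    using theta_sum i0(1) by (simp add: sum.remove)
  with i0(2) show ?thesis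
    by (simp add: sum_negf sum_divide_distrib[symmetric] field_simps)
qed

lemma q_gt_1:
  assumes "p > 1" "j \<in> J"
  shows "q j > 1"
proof -
  have "c j * (1 - 1/p) > 0"
    using assms c_pos[of j] by simp
  then have "\<theta> j * (1 - q j) > 0"
    using assms(2) q_def[of j] by simp
  with theta_neg[of j] assms(2) show ?thesis
    by (simp add: zero_less_mult_iff)
qed

lemma q_lt_1:
  assumes "p > 1"
  shows "q i0 < 1"
proof -
  have "c i0 * (1 - 1/p) > 0"
    using assms i0 c_pos[of i0] by simp
  then have "\<theta> i0 * (1 - q i0) > 0"
    using i0 q_def[of i0] by simp
  with i0(2) show ?thesis
    by (simp add: zero_less_mult_iff)
qed

lemma N_J_eq: "p > 1 \<Longrightarrow> j \<in> J \<Longrightarrow> N j = epow (I j) (q j)"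
  using q_gt_1[of j] by (simp add: Lnorm_inv_def)

lemma N_i0_eq_0:
  assumes "(\<integral>\<^sup>+x. f x \<partial>lebn d) = 0"
  shows "N i0 = 0"
proof (rule Lnorm_inv_eq_0[OF emeasure_space_lebn_neq_0 g_measurable[OF i0(1)]])
  show "AE y in lebn (dd i0). g i0 y = 0"
    using nn_integral_g[OF i0(1)] assms g_measurable[OF i0(1)] by (simp add: nn_integral_0_iff_AE)
qed

lemma rhs_eq_0_if_N_i0_eq_0:
  "N i0 = 0 \<Longrightarrow> X * (\<Prod>i\<in>K. epow (N i) (\<theta> i)) = 0"
  unfolding prod_K_split using i0 by simp

lemma adjoint_BL_p_eq_1:
  assumes "p = 1"
  shows "epow (BL d k dd B c) (1/p - 1) * (\<Prod>i\<in>K. epow (N i) (\<theta> i)) \<le> Lnorm_inv (lebn d) (1/p) f"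
proof -
  define F where "F = (\<integral>\<^sup>+x. f x \<partial>lebn d)"
  have "q i = 1" if "i \<in> K" for i
    using q_def[OF that] theta_neg[OF that] i0 assms by (cases "i = i0") auto
  then have "N i = F" if "i \<in> K" for i
    using nn_integral_g[OF that] that by (simp add: Lnorm_inv_def F_def)
  then have "(\<Prod>i\<in>K. epow (N i) (\<theta> i)) = (\<Prod>i\<in>K. epow F (\<theta> i))"
    by simp
  moreover have "(\<Prod>i\<in>K. epow F (\<theta> i)) \<le> F"
  proof (cases "F = 0 \<or> F = top")
    case True
    then show ?thesis
      using N_i0_eq_0 rhs_eq_0_if_N_i0_eq_0[of 1] \<open>\<And>i. i \<in> K \<Longrightarrow> N i = F\<close> i0(1)
      by (auto simp: F_def)
  next
    case False
    then have "(\<Prod>i\<in>K. epow F (\<theta> i)) = epow F (\<Sum>i\<in>K. \<theta> i)"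
      by (simp add: epow_sum)
    then show ?thesis
      unfolding theta_sum by simp
  qed
  ultimately show ?thesis
    using assms by (simp add: Lnorm_inv_def F_def)
qed

definition BL_input :: "((nat \<Rightarrow> real) \<Rightarrow> ennreal) \<Rightarrow> nat \<Rightarrow> (nat \<Rightarrow> real) \<Rightarrow> ennreal" where
  "BL_input h i = (if i = i0 then h else (\<lambda>y. epow (g i y) (1 / q i)))"

definition BL_integrand :: "((nat \<Rightarrow> real) \<Rightarrow> ennreal) \<Rightarrow> (nat \<Rightarrow> real) \<Rightarrow> ennreal" where
  "BL_integrand h x = (\<Prod>i\<in>K. epow (BL_input h i (A i x)) (c i))"

lemma BL_input_measurable:
  "h \<in> borel_measurable (lebn (dd i0)) \<Longrightarrow> i \<in> K \<Longrightarrow> BL_input h i \<in> borel_measurable (lebn (dd i))"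
  by (simp add: BL_input_def)

lemma BL_integrand_measurable [measurable]:
  "h \<in> borel_measurable (lebn (dd i0)) \<Longrightarrow> BL_integrand h \<in> borel_measurable (lebn d)"
  unfolding BL_integrand_def
  by (intro borel_measurable_prod_ennreal borel_measurable_epow
      measurable_compose[OF measurable_matapp BL_input_measurable])

lemma BL_integrand_split:
  "BL_integrand h x = epow (h (A i0 x)) (c i0) * (\<Prod>j\<in>J. epow (epow (g j (A j x)) (1 / q j)) (c j))"
  unfolding BL_integrand_def prod_K_split by (simp add: BL_input_def)

lemma AE_f_finite:
  assumes "p > 1" "Lnorm_inv (lebn d) (1/p) f \<noteq> top"
  shows "AE x in lebn d. f x \<noteq> top"
proof -
  have "(\<integral>\<^sup>+x. epow (f x) p \<partial>lebn d) \<noteq> top"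
    using assms by (auto simp: Lnorm_inv_def)
  then have "AE x in lebn d. epow (f x) p \<noteq> top"
    by (intro AE_noteq_top_of_nn_integral) auto
  with assms(1) show ?thesis
    by (auto simp: epow_eq_top_iff elim!: AE_mp)
qed

lemma AE_g_J_pos_finite:
  assumes "p > 1" "j \<in> J" "I j \<noteq> top"
  shows "AE x in lebn d. f x = 0 \<or> g j (A j x) \<in> {0<..<top}"
proof (rule is_pushforward_AE)
  have "AE y in lebn (dd j). epow (g j y) (1 / q j) \<noteq> top"
    using assms(2,3) by (intro AE_noteq_top_of_nn_integral) auto
  with q_gt_1[OF assms(1,2)] show "AE y in lebn (dd j). g j y = 0 \<or> g j y \<in> {0<..<top}"
    by (auto simp: epow_eq_top_iff less_top zero_less_iff_neq_zero elim!: AE_mp)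
qed (use assms(2) g_push in auto)

definition hoelder_weight :: "nat \<Rightarrow> real" where
  "hoelder_weight i = (if i = i0 then 1 / \<theta> i0 else - \<theta> i / \<theta> i0)"

definition hoelder_factor :: "((nat \<Rightarrow> real) \<Rightarrow> ennreal) \<Rightarrow> nat \<Rightarrow> (nat \<Rightarrow> real) \<Rightarrow> ennreal" where
  "hoelder_factor h i x = (if i = i0 then f x * epow (BL_integrand h x) (1 - 1/p)
     else f x * epow (epow (g i (A i x)) (1 / q i)) (1 - q i))"

lemma hoelder_weight_nonneg: "i \<in> K \<Longrightarrow> hoelder_weight i \<ge> 0"
  using i0(2) theta_neg[of i] by (auto simp: hoelder_weight_def divide_nonpos_pos less_imp_le)

lemma hoelder_weight_sum: "(\<Sum>i\<in>K. hoelder_weight i) = 1"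
proof -
  have "(\<Sum>i\<in>K. hoelder_weight i) = hoelder_weight i0 + (\<Sum>j\<in>J. hoelder_weight j)"
    using i0(1) by (intro sum.remove) auto
  also have "(\<Sum>j\<in>J. hoelder_weight j) = (\<Sum>j\<in>J. - \<theta> j / \<theta> i0)"
    by (rule sum.cong) (auto simp: hoelder_weight_def)
  finally show ?thesis
    using weights_sum by (simp add: hoelder_weight_def)
qed

lemma hoelder_factor_measurable:
  assumes [measurable]: "h \<in> borel_measurable (lebn (dd i0))" and "i \<in> K"
  shows "hoelder_factor h i \<in> borel_measurable (lebn d)"
  using assms(2) unfolding hoelder_factor_def by measurable

lemma prod_hoelder_factor:
  "(\<Prod>i\<in>K. epow (hoelder_factor h i x) (hoelder_weight i))
    = epow (f x * epow (BL_integrand h x) (1 - 1/p)) (1 / \<theta> i0)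
      * (\<Prod>j\<in>J. epow (f x * epow (epow (g j (A j x)) (1 / q j)) (1 - q j)) (- \<theta> j / \<theta> i0))"
  unfolding prod_K_split by (auto simp: hoelder_factor_def hoelder_weight_def intro!: prod.cong)

lemma nn_integral_hoelder_factor_i0:
  "(\<integral>\<^sup>+x. hoelder_factor h i0 x \<partial>lebn d) = (\<integral>\<^sup>+x. f x * epow (BL_integrand h x) (1 - 1/p) \<partial>lebn d)"
  by (intro nn_integral_cong) (simp add: hoelder_factor_def)

lemma nn_integral_hoelder_factor_J:
  assumes "p > 1" "j \<in> J" "I j \<noteq> top"
  shows "(\<integral>\<^sup>+x. hoelder_factor h j x \<partial>lebn d) = I j"
proof -
  have "j \<in> K" and [measurable]: "g j \<in> borel_measurable (lebn (dd j))"
    using assms(2) by auto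
  have "(\<integral>\<^sup>+x. hoelder_factor h j x \<partial>lebn d)
      = (\<integral>\<^sup>+x. f x * epow (epow (g j (A j x)) (1 / q j)) (1 - q j) \<partial>lebn d)"
    using assms(2) by (intro nn_integral_cong) (simp add: hoelder_factor_def)
  also have "\<dots> = (\<integral>\<^sup>+y. g j y * epow (epow (g j y) (1 / q j)) (1 - q j) \<partial>lebn (dd j))"
    using g_push[OF \<open>j \<in> K\<close>] by (rule is_pushforward_nn_integral) measurable
  also have "\<dots> = I j"
  proof (intro nn_integral_cong_AE)
    have "AE y in lebn (dd j). epow (g j y) (1 / q j) \<noteq> top"
      using assms(3) by (intro AE_noteq_top_of_nn_integral) auto
    with q_gt_1[OF assms(1,2)]
    show "AE y in lebn (dd j). g j y * epow (epow (g j y) (1 / q j)) (1 - q j) = epow (g j y) (1 / q j)"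
      by (auto simp: mult_epow_epow_inverse elim!: AE_mp)
  qed
  finally show ?thesis .
qed

lemma exponent_i0: "c i0 * (1 - 1/p) / \<theta> i0 = 1 - q i0"
  using q_def[OF i0(1)] i0(2) by simp

lemma exponent_J:
  assumes "j \<in> J"
  shows "(1 - q j) * (- \<theta> j / \<theta> i0) = - c j * (1 - 1/p) / \<theta> i0"
proof -
  have "(1 - q j) * (- \<theta> j / \<theta> i0) = - (\<theta> j * (1 - q j)) / \<theta> i0"
    by simp
  also have "\<dots> = - c j * (1 - 1/p) / \<theta> i0"
    using q_def[of j] assms by simp
  finally show ?thesis .
qed

lemma AE_test_integrand_le:
  assumes p: "p > 1" and P: "Lnorm_inv (lebn d) (1/p) f \<noteq> top"
    and I_finite: "\<And>j. j \<in> J \<Longrightarrow> I j \<noteq> top"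
  shows "AE x in lebn d. f x * epow (h (A i0 x)) (1 - q i0)
    \<le> (\<Prod>i\<in>K. epow (hoelder_factor h i x) (hoelder_weight i))"
proof -
  have "AE x in lebn d. \<forall>j\<in>J. f x = 0 \<or> g j (A j x) \<in> {0<..<top}"
    using AE_g_J_pos_finite[OF p _ I_finite] by (intro AE_finite_allI) auto
  with AE_f_finite[OF p P] show ?thesis
  proof eventually_elim
    case (elim x)
    show ?case
    proof (cases "f x = 0")
      case False
      have "epow (g j (A j x)) (1 / q j) \<noteq> 0 \<and> epow (g j (A j x)) (1 / q j) \<noteq> top" if "j \<in> J" for j
        using bspec[OF elim(2) that] False epow_neq_0_top[of "g j (A j x)" "1 / q j"]
        by (auto simp: zero_less_iff_neq_zero less_top)
      moreover have "- \<theta> j / \<theta> i0 \<ge> 0" if "j \<in> J" for j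
        using theta_neg[of j] i0(2) that by (simp add: divide_nonpos_pos)
      moreover have "1 - 1/p \<ge> 0"
        using p by simp
      ultimately show ?thesis
        unfolding prod_hoelder_factor BL_integrand_split exponent_i0[symmetric]
        using False elim(1) i0(2) exponent_J weights_sum
        by (intro eq_refl[OF epow_weighted_product_eq[symmetric]]) blast+
    qed simp
  qed
qed

lemma test_integral_le_Hoelder:
  assumes p: "p > 1" and P: "Lnorm_inv (lebn d) (1/p) f \<noteq> top"
    and I_finite: "\<And>j. j \<in> J \<Longrightarrow> I j \<noteq> top"
    and h [measurable]: "h \<in> borel_measurable (lebn (dd i0))"
  shows "(\<integral>\<^sup>+y. g i0 y * epow (h y) (1 - q i0) \<partial>lebn (dd i0))
    \<le> epow (\<integral>\<^sup>+x. f x * epow (BL_integrand h x) (1 - 1/p) \<partial>lebn d) (1 / \<theta> i0)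
       * (\<Prod>j\<in>J. epow (I j) (- \<theta> j / \<theta> i0))"
proof -
  have "(\<integral>\<^sup>+y. g i0 y * epow (h y) (1 - q i0) \<partial>lebn (dd i0))
      = (\<integral>\<^sup>+x. f x * epow (h (A i0 x)) (1 - q i0) \<partial>lebn d)"
    using g_push[OF i0(1)] by (rule is_pushforward_nn_integral[symmetric]) measurable
  also have "\<dots> \<le> (\<integral>\<^sup>+x. (\<Prod>i\<in>K. epow (hoelder_factor h i x) (hoelder_weight i)) \<partial>lebn d)"
    by (rule nn_integral_mono_AE[OF AE_test_integrand_le[OF p P I_finite]])
  also have "\<dots> \<le> (\<Prod>i\<in>K. epow (\<integral>\<^sup>+x. hoelder_factor h i x \<partial>lebn d) (hoelder_weight i))"
    by (intro nn_integral_prod_epow_le hoelder_factor_measurable hoelder_weight_nonneg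
        hoelder_weight_sum h) auto
  also have "\<dots> = epow (\<integral>\<^sup>+x. f x * epow (BL_integrand h x) (1 - 1/p) \<partial>lebn d) (1 / \<theta> i0)
       * (\<Prod>j\<in>J. epow (I j) (- \<theta> j / \<theta> i0))"
    unfolding prod_K_split nn_integral_hoelder_factor_i0
    using nn_integral_hoelder_factor_J[OF p _ I_finite]
    by (auto simp: hoelder_weight_def intro!: prod.cong)
  finally show ?thesis .
qed

lemma nn_integral_BL_integrand_le:
  assumes h [measurable]: "h \<in> borel_measurable (lebn (dd i0))"
    and h_pos: "(\<integral>\<^sup>+y. h y \<partial>lebn (dd i0)) \<noteq> 0" "(\<integral>\<^sup>+y. h y \<partial>lebn (dd i0)) \<noteq> top"
    and I_pos: "\<And>j. j \<in> J \<Longrightarrow> I j \<noteq> 0 \<and> I j \<noteq> top"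
  shows "(\<integral>\<^sup>+x. BL_integrand h x \<partial>lebn d)
    \<le> BL d k dd B c * (epow (\<integral>\<^sup>+y. h y \<partial>lebn (dd i0)) (c i0) * (\<Prod>j\<in>J. epow (I j) (c j)))"
proof -
  have "(\<integral>\<^sup>+x. BL_integrand h x \<partial>lebn d)
      \<le> BL d k dd B c * (\<Prod>i\<in>K. epow (\<integral>\<^sup>+y. BL_input h i y \<partial>lebn (dd i)) (c i))"
    unfolding BL_integrand_def
    using h_pos I_pos by (intro nn_integral_le_BL BL_input_measurable h) (auto simp: BL_input_def)
  also have "(\<Prod>i\<in>K. epow (\<integral>\<^sup>+y. BL_input h i y \<partial>lebn (dd i)) (c i))
      = epow (\<integral>\<^sup>+y. h y \<partial>lebn (dd i0)) (c i0) * (\<Prod>j\<in>J. epow (I j) (c j))"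
    unfolding prod_K_split by (auto simp: BL_input_def intro!: prod.cong)
  finally show ?thesis .
qed

lemma test_bound_eq:
  assumes p: "p > 1" and I_pos: "\<And>j. j \<in> J \<Longrightarrow> I j \<noteq> 0 \<and> I j \<noteq> top"
  shows "epow (P * epow (C * (epow H (c i0) * (\<Prod>j\<in>J. epow (I j) (c j)))) (1 - 1/p)) (1 / \<theta> i0)
      * (\<Prod>j\<in>J. epow (I j) (- \<theta> j / \<theta> i0))
    = epow P (1 / \<theta> i0) * epow C ((1 - 1/p) / \<theta> i0) * (\<Prod>j\<in>J. epow (N j) (- \<theta> j / \<theta> i0))
      * epow H (1 - q i0)"
proof -
  have first: "epow (P * epow (C * (epow H (c i0) * (\<Prod>j\<in>J. epow (I j) (c j)))) (1 - 1/p)) (1 / \<theta> i0)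
      = epow P (1 / \<theta> i0) * epow C ((1 - 1/p) / \<theta> i0) * epow H (1 - q i0)
        * (\<Prod>j\<in>J. epow (I j) (c j * (1 - 1/p) / \<theta> i0))"
    using p i0(2) exponent_i0
    by (simp add: epow_mult epow_prod epow_epow mult.assoc)
  have factor: "epow (I j) (c j * (1 - 1/p) / \<theta> i0) * epow (I j) (- \<theta> j / \<theta> i0)
      = epow (N j) (- \<theta> j / \<theta> i0)" if "j \<in> J" for j
  proof -
    have "c j * (1 - 1/p) / \<theta> i0 + - \<theta> j / \<theta> i0 = (c j * (1 - 1/p) - \<theta> j) / \<theta> i0"
      by (simp add: diff_divide_distrib)
    also have "c j * (1 - 1/p) - \<theta> j = - (q j * \<theta> j)"
      using q_def[of j] that by (simp add: algebra_simps)
    also have "- (q j * \<theta> j) / \<theta> i0 = q j * (- \<theta> j / \<theta> i0)"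
      by simp
    finally show ?thesis
      using I_pos[OF that] N_J_eq[OF p that] by (simp add: epow_add[symmetric] epow_epow)
  qed
  have J_part: "(\<Prod>j\<in>J. epow (I j) (c j * (1 - 1/p) / \<theta> i0)) * (\<Prod>j\<in>J. epow (I j) (- \<theta> j / \<theta> i0))
      = (\<Prod>j\<in>J. epow (N j) (- \<theta> j / \<theta> i0))"
    unfolding prod.distrib[symmetric]
  proof (rule prod.cong)
    show "epow (I j) (c j * (1 - 1/p) / \<theta> i0) * epow (I j) (- \<theta> j / \<theta> i0)
        = epow (N j) (- \<theta> j / \<theta> i0)" if "j \<in> J" for j
      using that by (rule factor)
  qed simp
  have regroup: "a * x * b * y * z = a * x * (y * z) * b" for a x b y z :: ennreal
    by (simp only: ac_simps)
  show ?thesis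
    unfolding first regroup J_part ..
qed

lemma test_integral_le:
  assumes p: "p > 1" and P: "Lnorm_inv (lebn d) (1/p) f \<noteq> top"
    and I_pos: "\<And>j. j \<in> J \<Longrightarrow> I j \<noteq> 0 \<and> I j \<noteq> top"
    and h [measurable]: "h \<in> borel_measurable (lebn (dd i0))"
    and h_pos: "(\<integral>\<^sup>+y. h y \<partial>lebn (dd i0)) \<noteq> 0" "(\<integral>\<^sup>+y. h y \<partial>lebn (dd i0)) \<noteq> top"
  shows "(\<integral>\<^sup>+y. g i0 y * epow (h y) (1 - q i0) \<partial>lebn (dd i0))
    \<le> epow (Lnorm_inv (lebn d) (1/p) f) (1 / \<theta> i0) * epow (BL d k dd B c) ((1 - 1/p) / \<theta> i0)
      * (\<Prod>j\<in>J. epow (N j) (- \<theta> j / \<theta> i0)) * epow (\<integral>\<^sup>+y. h y \<partial>lebn (dd i0)) (1 - q i0)"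
proof -
  have "(\<integral>\<^sup>+x. f x * epow (BL_integrand h x) (1 - 1/p) \<partial>lebn d)
      \<le> Lnorm_inv (lebn d) (1/p) f * epow (\<integral>\<^sup>+x. BL_integrand h x \<partial>lebn d) (1 - 1/p)"
    using p_ge by (intro nn_integral_mult_epow_le_Lnorm_inv) auto
  also have "\<dots> \<le> Lnorm_inv (lebn d) (1/p) f * epow (BL d k dd B c
      * (epow (\<integral>\<^sup>+y. h y \<partial>lebn (dd i0)) (c i0) * (\<Prod>j\<in>J. epow (I j) (c j)))) (1 - 1/p)"
    using p h_pos I_pos by (intro mult_left_mono epow_mono nn_integral_BL_integrand_le h) auto
  finally have integrand_le: "(\<integral>\<^sup>+x. f x * epow (BL_integrand h x) (1 - 1/p) \<partial>lebn d) \<le> \<dots>" .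
  have "(\<integral>\<^sup>+y. g i0 y * epow (h y) (1 - q i0) \<partial>lebn (dd i0))
    \<le> epow (\<integral>\<^sup>+x. f x * epow (BL_integrand h x) (1 - 1/p) \<partial>lebn d) (1 / \<theta> i0)
       * (\<Prod>j\<in>J. epow (I j) (- \<theta> j / \<theta> i0))"
    using p P I_pos by (intro test_integral_le_Hoelder h) auto
  also have "\<dots> \<le> epow (Lnorm_inv (lebn d) (1/p) f * epow (BL d k dd B c
      * (epow (\<integral>\<^sup>+y. h y \<partial>lebn (dd i0)) (c i0) * (\<Prod>j\<in>J. epow (I j) (c j)))) (1 - 1/p)) (1 / \<theta> i0)
       * (\<Prod>j\<in>J. epow (I j) (- \<theta> j / \<theta> i0))"
    using i0(2) integrand_le by (intro mult_right_mono epow_mono) auto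
  also have "\<dots> = epow (Lnorm_inv (lebn d) (1/p) f) (1 / \<theta> i0) * epow (BL d k dd B c) ((1 - 1/p) / \<theta> i0)
      * (\<Prod>j\<in>J. epow (N j) (- \<theta> j / \<theta> i0)) * epow (\<integral>\<^sup>+y. h y \<partial>lebn (dd i0)) (1 - q i0)"
    using p I_pos by (rule test_bound_eq)
  finally show ?thesis .
qed

lemma N_i0_le:
  assumes p: "p > 1" and P: "Lnorm_inv (lebn d) (1/p) f \<noteq> top"
    and I_pos: "\<And>j. j \<in> J \<Longrightarrow> I j \<noteq> 0 \<and> I j \<noteq> top"
  shows "N i0 \<le> epow (Lnorm_inv (lebn d) (1/p) f) (1 / \<theta> i0) * epow (BL d k dd B c) ((1 - 1/p) / \<theta> i0)
    * (\<Prod>j\<in>J. epow (N j) (- \<theta> j / \<theta> i0))"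
  using sigma_finite_lebn emeasure_space_lebn_neq_0 g_measurable[OF i0(1)] q_lt_1[OF p]
  by (rule Lnorm_inv_le_by_duality) (rule test_integral_le[OF p P I_pos])

lemma N_i0_eq_0_if_N_J_eq_0:
  assumes p: "p > 1" and j: "j \<in> J" and N_j: "N j = 0"
  shows "N i0 = 0"
proof (rule N_i0_eq_0)
  have "j \<in> K" and [measurable]: "g j \<in> borel_measurable (lebn (dd j))"
    using j by auto
  have q_pos: "q j > 0"
    using q_gt_1[OF p j] by simp
  with N_j N_J_eq[OF p j] have "I j = 0"
    by (simp add: epow_eq_0_iff)
  then have "AE y in lebn (dd j). g j y = 0"
    using q_pos by (auto simp: nn_integral_0_iff_AE epow_eq_0_iff elim!: AE_mp)
  then have "(\<integral>\<^sup>+y. g j y \<partial>lebn (dd j)) = 0"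
    by (simp add: nn_integral_0_iff_AE)
  then show "(\<integral>\<^sup>+x. f x \<partial>lebn d) = 0"
    using nn_integral_g[OF \<open>j \<in> K\<close>] by simp
qed

lemma rhs_le_if_epow_N_i0_le:
  assumes BL: "BL d k dd B c \<noteq> 0" "BL d k dd B c \<noteq> top"
    and N_pos: "\<And>j. j \<in> J \<Longrightarrow> N j \<noteq> 0 \<and> N j \<noteq> top"
    and N_i0: "epow (N i0) (\<theta> i0) \<le> P * epow (BL d k dd B c) (1 - 1/p) * (\<Prod>j\<in>J. epow (N j) (- \<theta> j))"
  shows "epow (BL d k dd B c) (1/p - 1) * (\<Prod>i\<in>K. epow (N i) (\<theta> i)) \<le> P"
proof -
  have BL_cancel: "epow (BL d k dd B c) (1/p - 1) * epow (BL d k dd B c) (1 - 1/p) = 1"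
    using BL by (simp add: epow_add[symmetric])
  have N_cancel: "(\<Prod>j\<in>J. epow (N j) (- \<theta> j)) * (\<Prod>j\<in>J. epow (N j) (\<theta> j)) = 1"
    unfolding prod.distrib[symmetric] using N_pos
    by (intro prod.neutral) (simp add: epow_add[symmetric])
  have "epow (BL d k dd B c) (1/p - 1) * (\<Prod>i\<in>K. epow (N i) (\<theta> i))
      = epow (BL d k dd B c) (1/p - 1) * (epow (N i0) (\<theta> i0) * (\<Prod>j\<in>J. epow (N j) (\<theta> j)))"
    unfolding prod_K_split ..
  also have "\<dots> \<le> epow (BL d k dd B c) (1/p - 1)
      * (P * epow (BL d k dd B c) (1 - 1/p) * (\<Prod>j\<in>J. epow (N j) (- \<theta> j)) * (\<Prod>j\<in>J. epow (N j) (\<theta> j)))"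
    by (intro mult_left_mono mult_right_mono N_i0) auto
  also have "\<dots> = P"
    using BL_cancel N_cancel by (metis (no_types, lifting) mult.assoc mult.left_commute mult_1_right)
  finally show ?thesis .
qed

lemma adjoint_BL_nondegenerate:
  assumes p: "p > 1" and P: "Lnorm_inv (lebn d) (1/p) f \<noteq> top" and BL: "BL d k dd B c \<noteq> top"
    and N_pos: "\<And>j. j \<in> J \<Longrightarrow> N j \<noteq> 0 \<and> N j \<noteq> top"
  shows "epow (BL d k dd B c) (1/p - 1) * (\<Prod>i\<in>K. epow (N i) (\<theta> i)) \<le> Lnorm_inv (lebn d) (1/p) f"
proof -
  define P where "P = Lnorm_inv (lebn d) (1/p) f"
  have I_pos: "I j \<noteq> 0 \<and> I j \<noteq> top" if "j \<in> J" for j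
    using N_pos[OF that] N_J_eq[OF p that] q_gt_1[OF p that] by (auto simp: epow_eq_0_iff epow_eq_top_iff)
  have exponent_pos: "(1 - 1/p) / \<theta> i0 > 0"
    using p i0(2) by simp
  note bound = N_i0_le[OF p P I_pos, folded P_def]
  show ?thesis
  proof (cases "BL d k dd B c = 0")
    case True
    with bound exponent_pos have "N i0 = 0"
      by simp
    then show ?thesis
      by (simp only: rhs_eq_0_if_N_i0_eq_0[OF \<open>N i0 = 0\<close>] zero_le)
  next
    case False
    have "epow (N i0) (\<theta> i0) \<le> epow (epow P (1 / \<theta> i0) * epow (BL d k dd B c) ((1 - 1/p) / \<theta> i0)
        * (\<Prod>j\<in>J. epow (N j) (- \<theta> j / \<theta> i0))) (\<theta> i0)"
      using bound i0(2) by (intro epow_mono) auto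
    also have "\<dots> = P * epow (BL d k dd B c) (1 - 1/p) * (\<Prod>j\<in>J. epow (N j) (- \<theta> j))"
      using i0(2) by (simp add: epow_mult epow_prod epow_epow)
    finally show ?thesis
      unfolding P_def using False BL N_pos by (intro rhs_le_if_epow_N_i0_le)
  qed
qed

lemma adjoint_BL_inequality:
  "epow (BL d k dd B c) (1/p - 1) * (\<Prod>i\<in>K. epow (N i) (\<theta> i)) \<le> Lnorm_inv (lebn d) (1/p) f"
proof (cases "p = 1")
  case False
  with p_ge have p: "p > 1"
    by simp
  consider "Lnorm_inv (lebn d) (1/p) f = top" | "BL d k dd B c = top"
    | j where "j \<in> J" "N j = top" | j where "j \<in> J" "N j = 0"
    | "Lnorm_inv (lebn d) (1/p) f \<noteq> top" "BL d k dd B c \<noteq> top" "\<And>j. j \<in> J \<Longrightarrow> N j \<noteq> 0 \<and> N j \<noteq> top"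
    by blast
  then show ?thesis
  proof cases
    case 2
    with p show ?thesis
      by simp
  next
    case (3 j)
    then have "epow (N j) (\<theta> j) = 0"
      using theta_neg[of j] by simp
    with \<open>j \<in> J\<close> have J_factor: "(\<Prod>j\<in>J. epow (N j) (\<theta> j)) = 0"
      by (intro prod_zero) blast+
    show ?thesis
      unfolding prod_K_split J_factor by simp
  next
    case (4 j)
    with p have "N i0 = 0"
      by (intro N_i0_eq_0_if_N_J_eq_0)
    then show ?thesis
      by (simp only: rhs_eq_0_if_N_i0_eq_0[OF \<open>N i0 = 0\<close>] zero_le)
  next
    case 5
    with p show ?thesis
      by (rule adjoint_BL_nondegenerate)
  qed simp
qed (rule adjoint_BL_p_eq_1)

end

theorem theorem3p1:
  fixes d k :: nat and dd :: "nat \<Rightarrow> nat" and B :: "nat \<Rightarrow> nat \<Rightarrow> nat \<Rightarrow> real"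
    and c \<theta> :: "nat \<Rightarrow> real" and p :: real and q :: "nat \<Rightarrow> real"
    and f :: "(nat \<Rightarrow> real) \<Rightarrow> ennreal" and g :: "nat \<Rightarrow> (nat \<Rightarrow> real) \<Rightarrow> ennreal"
  assumes surj: "\<forall>i\<in>{1..k}. matapp (dd i) d (B i) ` (\<Pi>\<^sub>E j\<in>{..<d}. UNIV)
                              = (\<Pi>\<^sub>E r\<in>{..<dd i}. UNIV)"
    and c_pos: "\<forall>i\<in>{1..k}. c i > 0"
    and p_ge: "p \<ge> 1"
    and theta_nz: "\<forall>i\<in>{1..k}. \<theta> i \<noteq> 0"
    and theta_sum: "(\<Sum>i\<in>{1..k}. \<theta> i) = 1"
    and theta_one_pos: "\<exists>!i. i \<in> {1..k} \<and> \<theta> i > 0"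
    and q_def: "\<forall>i\<in>{1..k}. c i * (1 - 1 / p) = \<theta> i * (1 - q i)"
    and f_meas: "f \<in> borel_measurable (lebn d)"
    and g_push: "\<forall>i\<in>{1..k}. is_pushforward d (dd i) (matapp (dd i) d (B i)) f (g i)"
  shows "Lnorm_inv (lebn d) (1 / p) f
           \<ge> epow (BL d k dd B c) (1 / p - 1)
               * (\<Prod>i\<in>{1..k}. epow (Lnorm_inv (lebn (dd i)) (q i) (g i)) (\<theta> i))"
proof -
  obtain i0 where i0: "i0 \<in> {1..k}" "\<theta> i0 > 0"
    and unique: "\<And>i. i \<in> {1..k} \<Longrightarrow> \<theta> i > 0 \<Longrightarrow> i = i0"
    using theta_one_pos by blast
  have "\<theta> i < 0" if "i \<in> {1..k}" "i \<noteq> i0" for i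
    using theta_nz unique that by (meson linorder_neqE_linordered_idom)
  then interpret adjoint_BL d k dd B c \<theta> p q f g i0
    using c_pos p_ge theta_sum i0 q_def f_meas g_push by unfold_locales auto
  show ?thesis
    by (rule adjoint_BL_inequality)
qed

end
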